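(* Let $F$ be a field of characteristic $0$, $d\ge1$, let $\lambda=(h_1,\dots,h_n)\vdash k$, let $\sigma\in S_n$, and let $\sigma(\lambda)=(\mu_1,\dots,\mu_l)\vdash k$. Let $G:=ST(\lambda)(x_1,\dots,x_k)$, evaluated at $x_1,\dots,x_k\in M_d(F)$, viewed as an element of $M_d(F)^{\otimes n}=\mathrm{End}((F^d)^{\otimes n})$. If some $\mu_i$ is even or the $\mu_i$ are not pairwise distinct, then $\mathrm{tr}(\sigma G)=0$ for all $x_1,\dots,x_k$. Otherwise there is a sign $\pm$ (independent of the $x_i$) such that, as functions of $(x_1,\dots,x_k)\in M_d(F)^k$, $$\mathrm{tr}(\sigma G)=\pm\,T_{\mu_1}\wedge\cdots\wedge T_{\mu_l}.$$
   Context: $ST(\lambda)$: for a partition $\lambda=(h_1,\dots,h_n)\vdash k$, set $X_j:=x_{h_1+\dots+h_{j-1}+1}\cdots x_{h_1+\dots+h_j}$ and $ST(\lambda)(x_1,\dots,x_k):=\sum_{\tau\in S_k}\epsilon_\tau (X_1\otimes\cdots\otimes X_n)(x_{\tau(1)},\dots,x_{\tau(k)})$, the alternation of $X_1\otimes\cdots\otimes X_n$ over $x_1,\dots,x_k$. $S_n$ acts on $(F^d)^{\otimes n}$ by permuting tensor factors, normalized so that $\mathrm{tr}((m,m-1,\dots,1)\,y_1\otimes\cdots\otimes y_m)=\mathrm{tr}(y_1y_2\cdots y_m)$. For $\sigma\in S_n$ with cycle decomposition $c_1\cdots c_l$ (fixed points included as $1$-cycles), $\sigma(\lambda)$ is the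 partition $(\sum_{i\in c_1}h_i,\dots,\sum_{i\in c_l}h_i)$ arranged non-increasingly. $T_j(y_1,\dots,y_j):=\mathrm{tr}\big(\sum_{\tau\in S_j}\epsilon_\tau y_{\tau(1)}\cdots y_{\tau(j)}\big)$. For multilinear alternating functions $f$ in $h$ variables and $g$ in $m$ variables, $(f\wedge g)(x_1,\dots,x_{h+m}):=\frac{1}{h!m!}\sum_{\tau\in S_{h+m}}\epsilon_\tau f(x_{\tau(1)},\dots,x_{\tau(h)})g(x_{\tau(h+1)},\dots,x_{\tau(h+m)})$ (associative). *)

theory Defs
  imports "HOL-Analysis.Analysis" "HOL-Combinatorics.Permutations" "HOL-Combinatorics.Orbits"
          "HOL-Library.Multiset"
begin

text \<open>Matrices M_d(F) are 'a^'d^'d with 'd a finite type (d = CARD('d) \<ge> 1).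
  Indices are 0-based: x 0, ..., x (k-1) stand for x_1, ..., x_k.\<close>

definition mtrace :: "'a::semiring_1^'d^'d \<Rightarrow> 'a" where
  "mtrace A = (\<Sum>i\<in>UNIV. A $ i $ i)"

definition mprod_list :: "('a::semiring_1^'d^'d) list \<Rightarrow> 'a^'d^'d" where
  "mprod_list As = foldr (**) As (mat 1)"

text \<open>Basis of (F^d)^{\<otimes>n}: multi-indices {..<n} \<rightarrow> 'd.\<close>
definition midx :: "nat \<Rightarrow> (nat \<Rightarrow> 'd) set" where
  "midx n = PiE {..<n} (\<lambda>_. UNIV)"

text \<open>Elements of End((F^d)^{\<otimes>n}) as matrices indexed by multi-indices.
  Tensor product y_1 \<otimes> ... \<otimes> y_n of matrices.\<close>
definition tensor_mats :: "nat \<Rightarrow> (nat \<Rightarrow> 'a::comm_semiring_1^'d^'d)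
    \<Rightarrow> (nat \<Rightarrow> 'd) \<Rightarrow> (nat \<Rightarrow> 'd) \<Rightarrow> 'a" where
  "tensor_mats n ys r s = (\<Prod>j<n. ys j $ r j $ s j)"

text \<open>Action of \<sigma> \<in> S_n on (F^d)^{\<otimes>n} permuting tensor factors:
  v_1 \<otimes> ... \<otimes> v_n \<mapsto> v_{\<sigma>^{-1}(1)} \<otimes> ... \<otimes> v_{\<sigma>^{-1}(n)}, i.e. e_s \<mapsto> e_{s \<circ> \<sigma>^{-1}}.
  With this convention tr((m,m-1,...,1) y_1\<otimes>...\<otimes>y_m) = tr(y_1 y_2 ... y_m).\<close>
definition perm_op :: "nat \<Rightarrow> (nat \<Rightarrow> nat) \<Rightarrow> (nat \<Rightarrow> 'd) \<Rightarrow> (nat \<Rightarrow> 'd) \<Rightarrow> 'a::zero_neq_one" where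
  "perm_op n \<sigma> r s = (if r = restrict (\<lambda>j. s (inv \<sigma> j)) {..<n} then 1 else 0)"

definition tr_perm :: "nat \<Rightarrow> (nat \<Rightarrow> nat) \<Rightarrow> ((nat \<Rightarrow> 'd::finite) \<Rightarrow> (nat \<Rightarrow> 'd) \<Rightarrow> 'a::comm_ring_1) \<Rightarrow> 'a" where
  "tr_perm n \<sigma> A = (\<Sum>r\<in>midx n. \<Sum>s\<in>midx n. perm_op n \<sigma> r s * A s r)"

text \<open>Partition \<lambda> = (h_1,...,h_n) as a list h; X_j = x_{h_1+..+h_{j-1}+1} ... x_{h_1+..+h_j}.\<close>
definition Xblock :: "nat list \<Rightarrow> nat \<Rightarrow> (nat \<Rightarrow> 'a::semiring_1^'d^'d) \<Rightarrow> 'a^'d^'d" where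
  "Xblock h j x = mprod_list (map x [sum_list (take j h) ..< sum_list (take (Suc j) h)])"

definition ST :: "nat list \<Rightarrow> (nat \<Rightarrow> 'a::comm_ring_1^'d^'d) \<Rightarrow> (nat \<Rightarrow> 'd) \<Rightarrow> (nat \<Rightarrow> 'd) \<Rightarrow> 'a" where
  "ST h x r s = (\<Sum>\<tau> | \<tau> permutes {..<sum_list h}.
      of_int (sign \<tau>) * tensor_mats (length h) (\<lambda>j. Xblock h j (\<lambda>i. x (\<tau> i))) r s)"

text \<open>\<sigma>(\<lambda>) as a multiset: sums of h over the cycles (orbits, fixed points included) of \<sigma>.\<close>
definition cycle_partition :: "nat list \<Rightarrow> (nat \<Rightarrow> nat) \<Rightarrow> nat multiset" where
  "cycle_partition h \<sigma> =
     image_mset (\<lambda>C. \<Sum>i\<in>C. h ! i) (mset_set ((\<lambda>i. orbit \<sigma> i) ` {..<length h}))"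

definition msmult :: "'a::times \<Rightarrow> 'a^'d^'d \<Rightarrow> 'a^'d^'d" where
  "msmult c A = (\<chi> i j. c * A $ i $ j)"

definition Tfun :: "nat \<Rightarrow> (nat \<Rightarrow> 'a::comm_ring_1^'d^'d) \<Rightarrow> 'a" where
  "Tfun j y = mtrace (\<Sum>\<tau> | \<tau> permutes {..<j}.
      msmult (of_int (sign \<tau>)) (mprod_list (map (\<lambda>i. y (\<tau> i)) [0..<j])))"

definition wedge :: "((nat \<Rightarrow> 'm) \<Rightarrow> 'a::field_char_0) \<Rightarrow> nat \<Rightarrow> ((nat \<Rightarrow> 'm) \<Rightarrow> 'a) \<Rightarrow> nat
    \<Rightarrow> (nat \<Rightarrow> 'm) \<Rightarrow> 'a" where
  "wedge f a g b x = (1 / (fact a * fact b)) *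
     (\<Sum>\<tau> | \<tau> permutes {..<a + b}.
        of_int (sign \<tau>) * f (\<lambda>i. x (\<tau> i)) * g (\<lambda>i. x (\<tau> (a + i))))"

text \<open>T_{\<mu>_1} \<wedge> ... \<wedge> T_{\<mu>_l} (bracketed to the right; \<wedge> is associative).\<close>
fun wedgeT :: "nat list \<Rightarrow> (nat \<Rightarrow> 'a::field_char_0^'d^'d) \<Rightarrow> 'a" where
  "wedgeT [] = (\<lambda>x. 1)"
| "wedgeT (m # ms) = wedge (Tfun m) m (wedgeT ms) (sum_list ms)"

end

theory Submission
  imports Defs "HOL-Combinatorics.Cycles"
begin

text \<open>
  Contracting indices along the cycles of \<sigma>^-1 gives
  tr(\<sigma> (Y_1 \<otimes> ... \<otimes> Y_n)) = \<Prod>_c tr(\<Prod>_{j \<in> c} Y_j), the product running over the cycles c.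
  For Y_j = X_j every cycle contributes the trace of a word of length \<mu>_c in the variables, so
  tr(\<sigma> G) is the alternation of a product of traces of words of lengths \<mu>_1, ..., \<mu>_l which
  together use every variable once. Relabelling the variables so that these words become
  consecutive costs the sign of the relabelling, and the alternation of
  tr(x_1 ... x_\<mu>_1) tr(x_(\<mu>_1+1) ...) ... is T_\<mu>_1 \<wedge> ... \<wedge> T_\<mu>_l, because the wedge of two
  alternations is the alternation of their product. The alternation vanishes as soon as an odd
  permutation of the variables fixes the integrand: the cyclic rotation of a word of even length
  (the trace is cyclic), or the exchange of two words of the same odd length.
\<close>

lemma mprod_list_Nil [simp]: "mprod_list [] = mat 1"
  by (simp add: mprod_list_def)

lemma mprod_list_Cons [simp]: "mprod_list (A # As) = A ** mprod_list As"
  by (simp add: mprod_list_def)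

lemma mprod_list_append: "mprod_list (As @ Bs) = mprod_list As ** mprod_list Bs"
  by (induction As) (simp_all add: matrix_mul_assoc)

lemma mprod_list_map_concat:
  "mprod_list (map y (concat (map g cs))) = mprod_list (map (\<lambda>j. mprod_list (map y (g j))) cs)"
  by (induction cs) (simp_all add: mprod_list_append)

lemma mtrace_eq_trace: "mtrace A = trace A"
  by (simp add: mtrace_def trace_def)

lemma mtrace_mprod_list_rotate1:
  fixes y :: "nat \<Rightarrow> 'a::comm_semiring_1^'d^'d"
  shows "mtrace (mprod_list (map y (rotate1 cs))) = mtrace (mprod_list (map y cs))"
proof (cases cs)
  case (Cons c cs')
  then show ?thesis
    using trace_mul_sym[of "y c" "mprod_list (map y cs')"]
    by (simp add: mprod_list_append mtrace_eq_trace)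
qed simp

lemma mtrace_sum: "mtrace (sum f S) = (\<Sum>s\<in>S. mtrace (f s))"
  unfolding mtrace_def by (simp add: sum.swap[of _ UNIV])

lemma mtrace_msmult: "mtrace (msmult c A) = c * mtrace A"
  unfolding mtrace_def msmult_def by (simp add: sum_distrib_left)

section \<open>Traces of permuted tensor products\<close>

text \<open>The trace of (\<otimes>_{j \<in> I} Y_j) composed with the operator e_s \<mapsto> e_(s \<circ> \<tau>) of (F^d)^{\<otimes> I},
  written out in the standard basis.\<close>
definition perm_trace_on ::
    "nat set \<Rightarrow> (nat \<Rightarrow> nat) \<Rightarrow> (nat \<Rightarrow> 'a::comm_semiring_1^'d::finite^'d) \<Rightarrow> 'a" where
  "perm_trace_on I \<tau> Y = (\<Sum>s\<in>I \<rightarrow>\<^sub>E UNIV. \<Prod>j\<in>I. Y j $ s j $ s (\<tau> j))"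

lemma sum_PiE_insert:
  assumes "x \<notin> S"
  shows "(\<Sum>g\<in>PiE (insert x S) T. F g) = (\<Sum>y\<in>T x. \<Sum>g\<in>PiE S T. F (g(x := y)))"
  unfolding PiE_insert_eq sum.reindex[OF inj_combinator[OF assms]] sum.cartesian_product
  by (simp add: case_prod_beta')

lemma perm_trace_on_cong:
  assumes "\<And>j. j \<in> I \<Longrightarrow> \<tau> j = \<tau>' j" "\<And>j. j \<in> I \<Longrightarrow> Y j = Y' j"
  shows "perm_trace_on I \<tau> Y = perm_trace_on I \<tau>' Y'"
  unfolding perm_trace_on_def using assms by (intro sum.cong prod.cong) auto

lemma perm_trace_on_fixpoint:
  assumes "finite I" "b \<in> I" "\<tau> b = b" "\<tau> ` (I - {b}) \<subseteq> I - {b}"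
  shows "perm_trace_on I \<tau> Y = mtrace (Y b) * perm_trace_on (I - {b}) \<tau> Y"
proof -
  define J where "J = I - {b}"
  have I: "I = insert b J" "b \<notin> J" "finite J" using assms(1,2) by (auto simp: J_def)
  have "(\<Prod>j\<in>insert b J. Y j $ (s(b := v)) j $ (s(b := v)) (\<tau> j)) =
      Y b $ v $ v * (\<Prod>j\<in>J. Y j $ s j $ s (\<tau> j))" for s v
  proof -
    have "(\<Prod>j\<in>J. Y j $ (s(b := v)) j $ (s(b := v)) (\<tau> j)) = (\<Prod>j\<in>J. Y j $ s j $ s (\<tau> j))"
      using assms(4) I(2) by (intro prod.cong) (auto simp: J_def)
    then show ?thesis using I(2,3) assms(3) by (simp add: prod.insert)
  qed
  then have "perm_trace_on I \<tau> Y =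
      (\<Sum>v\<in>UNIV. \<Sum>s\<in>J \<rightarrow>\<^sub>E UNIV. Y b $ v $ v * (\<Prod>j\<in>J. Y j $ s j $ s (\<tau> j)))"
    unfolding perm_trace_on_def I(1) sum_PiE_insert[OF I(2)] by presburger
  also have "\<dots> = mtrace (Y b) * perm_trace_on J \<tau> Y"
    unfolding perm_trace_on_def mtrace_def
    by (simp only: sum_distrib_left sum_distrib_right) (rule sum.swap)
  finally show ?thesis by (simp add: J_def)
qed

lemma perm_trace_on_contract:
  assumes "finite I" "a \<in> I" "b \<in> I" "a \<noteq> b" "\<tau> a = b" "\<tau> ` (I - {a}) \<subseteq> I - {b}"
  shows "perm_trace_on I \<tau> Y = perm_trace_on (I - {b}) (\<tau>(a := \<tau> b)) (Y(a := Y a ** Y b))"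
proof -
  define J where "J = I - {b}"
  have J: "I = insert b J" "b \<notin> J" "finite J" "a \<in> J" using assms(1-4) by (auto simp: J_def)
  have \<tau>J: "\<tau> j \<in> J" if "j \<in> I - {a}" for j using assms(6) that by (auto simp: J_def)
  have "(\<Prod>j\<in>insert b J. Y j $ (s(b := v)) j $ (s(b := v)) (\<tau> j)) =
      Y a $ s a $ v * Y b $ v $ s (\<tau> b) * (\<Prod>j\<in>J - {a}. Y j $ s j $ s (\<tau> j))" for s v
  proof -
    have "(\<Prod>j\<in>J - {a}. Y j $ (s(b := v)) j $ (s(b := v)) (\<tau> j)) = (\<Prod>j\<in>J - {a}. Y j $ s j $ s (\<tau> j))"
      using \<tau>J J(2) by (intro prod.cong) (auto simp: J_def)
    moreover have "\<tau> b \<in> J" using \<tau>J assms(3,4) by simp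
    ultimately show ?thesis
      using J assms(4,5) by (auto simp: prod.insert prod.remove[of J a] mult_ac)
  qed
  then have "perm_trace_on I \<tau> Y = (\<Sum>s\<in>J \<rightarrow>\<^sub>E UNIV. \<Sum>v\<in>UNIV.
      Y a $ s a $ v * Y b $ v $ s (\<tau> b) * (\<Prod>j\<in>J - {a}. Y j $ s j $ s (\<tau> j)))"
    unfolding perm_trace_on_def J(1) sum_PiE_insert[OF J(2)] by (subst sum.swap) presburger
  also have "\<dots> = (\<Sum>s\<in>J \<rightarrow>\<^sub>E UNIV.
      (Y a ** Y b) $ s a $ s (\<tau> b) * (\<Prod>j\<in>J - {a}. Y j $ s j $ s (\<tau> j)))"
    by (simp add: matrix_matrix_mult_def sum_distrib_right)
  also have "\<dots> = perm_trace_on J (\<tau>(a := \<tau> b)) (Y(a := Y a ** Y b))"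
    unfolding perm_trace_on_def using J(3,4)
    by (intro sum.cong refl) (simp add: prod.remove[of J a] cong: prod.cong_simp)
  finally show ?thesis by (simp add: J_def)
qed

lemma perm_trace_on_cycle:
  assumes "finite I" "distinct (c # cs)" "set (c # cs) \<subseteq> I" "map \<tau> (c # cs) = cs @ [c]"
    and "\<tau> ` (I - set (c # cs)) \<subseteq> I - set (c # cs)"
  shows "perm_trace_on I \<tau> Y =
    mtrace (mprod_list (map Y (c # cs))) * perm_trace_on (I - set (c # cs)) \<tau> Y"
  using assms
proof (induction cs arbitrary: I \<tau> Y)
  case Nil
  then show ?case by (simp add: perm_trace_on_fixpoint)
next
  case (Cons c' cs)
  define \<tau>' Y' where "\<tau>' = \<tau>(c := \<tau> c')" and "Y' = Y(c := Y c ** Y c')"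
  have \<tau>: "\<tau> c = c'" "map \<tau> (c' # cs) = cs @ [c]" using Cons.prems(4) by simp_all
  have contract: "perm_trace_on I \<tau> Y = perm_trace_on (I - {c'}) \<tau>' Y'"
    unfolding \<tau>'_def Y'_def
  proof (rule perm_trace_on_contract)
    have "\<tau> j \<in> I - {c'}" if "j \<in> I - {c}" for j
    proof (cases "j \<in> set (c' # cs)")
      case True
      then have "\<tau> j \<in> set (cs @ [c])" using \<tau>(2) by (metis list.set_map imageI)
      then show ?thesis using Cons.prems(2,3) by auto
    qed (use Cons.prems(5) that in auto)
    then show "\<tau> ` (I - {c}) \<subseteq> I - {c'}" by blast
  qed (use Cons.prems \<tau> in auto)
  have "map \<tau>' (c # cs) = cs @ [c]"
    using \<tau>(2) Cons.prems(2) by (simp add: \<tau>'_def)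
  moreover have "\<tau>' ` (I - {c'} - set (c # cs)) \<subseteq> I - {c'} - set (c # cs)"
    using Cons.prems(5) by (auto simp: \<tau>'_def)
  ultimately have "perm_trace_on (I - {c'}) \<tau>' Y' =
      mtrace (mprod_list (map Y' (c # cs))) * perm_trace_on (I - {c'} - set (c # cs)) \<tau>' Y'"
    using Cons.prems(1-3) by (intro Cons.IH) auto
  also have "mprod_list (map Y' (c # cs)) = mprod_list (map Y (c # c' # cs))"
  proof -
    have "map Y' cs = map Y cs" using Cons.prems(2) by (auto simp: Y'_def)
    then show ?thesis by (simp only: list.map mprod_list_Cons) (simp add: Y'_def matrix_mul_assoc)
  qed
  also have "I - {c'} - set (c # cs) = I - set (c # c' # cs)" by auto
  also have "perm_trace_on (I - set (c # c' # cs)) \<tau>' Y' =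
      perm_trace_on (I - set (c # c' # cs)) \<tau> Y"
    by (rule perm_trace_on_cong) (auto simp: \<tau>'_def Y'_def)
  finally show ?case using contract by simp
qed

lemma map_support_eq_rotate1:
  assumes "permutation p"
  shows "map p (support p a) = rotate1 (support p a)"
proof -
  have "map p (support p a) = map (cycle_of_list (support p a)) (support p a)"
    using cycle_restrict[OF assms] by (intro map_cong) auto
  also have "\<dots> = rotate1 (support p a)"
    using cyclic_rotation[OF cycle_of_permutation[OF assms], of 1] by simp
  finally show ?thesis .
qed

lemma set_support_eq_orbit:
  assumes "permutation p"
  shows "set (support p a) = orbit p a"
  unfolding support_set[OF assms] orbit_altdef_permutation[OF assms] by auto

lemma orbit_subset_if_image_subset:
  assumes "p ` I \<subseteq> I" "a \<in> I"
  shows "orbit p a \<subseteq> I"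
proof
  fix b assume "b \<in> orbit p a"
  then show "b \<in> I" by induction (use assms in auto)
qed

lemma orbit_eq_if_mem_orbit:
  assumes "permutation p" "b \<in> orbit p a"
  shows "orbit p b = orbit p a"
  using orbit_cyclic_eq3[OF cyclic_on_orbit'[OF assms(1)] assms(2)] .

lemma image_Diff_orbit_subset:
  assumes "permutation p" "p ` I \<subseteq> I"
  shows "p ` (I - orbit p a) \<subseteq> I - orbit p a"
proof -
  have "p b \<notin> orbit p a" if "b \<notin> orbit p a" for b
  proof
    assume "p b \<in> orbit p a"
    then have "orbit p b = orbit p a"
      using orbit_eq_if_mem_orbit[OF assms(1)] permutation_orbit_step[OF assms(1), of b] by simp
    then show False using that permutation_self_in_orbit[OF assms(1)] by blast
  qed
  then show ?thesis using assms(2) by auto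
qed

lemma perm_trace_on_orbit:
  assumes "finite I" "permutation \<tau>" "\<tau> ` I \<subseteq> I" "i \<in> I"
  shows "perm_trace_on I \<tau> Y =
    mtrace (mprod_list (map Y (support \<tau> i))) * perm_trace_on (I - orbit \<tau> i) \<tau> Y"
proof -
  obtain cs where cs: "support \<tau> i = i # cs"
    using least_power_of_permutation(2)[OF assms(2), of i] by (auto simp: upt_conv_Cons)
  have orbit: "set (i # cs) = orbit \<tau> i" using set_support_eq_orbit[OF assms(2), of i] cs by simp
  have "perm_trace_on I \<tau> Y =
      mtrace (mprod_list (map Y (i # cs))) * perm_trace_on (I - set (i # cs)) \<tau> Y"
  proof (rule perm_trace_on_cycle)
    show "distinct (i # cs)" using cycle_of_permutation[OF assms(2), of i] cs by simp
    show "map \<tau> (i # cs) = cs @ [i]" using map_support_eq_rotate1[OF assms(2), of i] cs by simp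
    show "set (i # cs) \<subseteq> I" unfolding orbit by (rule orbit_subset_if_image_subset[OF assms(3,4)])
    show "\<tau> ` (I - set (i # cs)) \<subseteq> I - set (i # cs)"
      unfolding orbit by (rule image_Diff_orbit_subset[OF assms(2,3)])
  qed (rule assms(1))
  then show ?thesis using cs orbit by simp
qed

lemma mset_set_orbits_Diff_orbit:
  assumes "finite I" "permutation p" "i \<in> I" "orbit p i \<subseteq> I"
  shows "mset_set ((\<lambda>j. orbit p j) ` I) =
    add_mset (orbit p i) (mset_set ((\<lambda>j. orbit p j) ` (I - orbit p i)))"
proof -
  have "orbit p j = orbit p i" if "j \<in> orbit p i" for j
    using orbit_eq_if_mem_orbit[OF assms(2) that] .
  then have "(\<lambda>j. orbit p j) ` I = insert (orbit p i) ((\<lambda>j. orbit p j) ` (I - orbit p i))"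
    using assms(3,4) permutation_self_in_orbit[OF assms(2)] by blast
  moreover have "orbit p i \<notin> (\<lambda>j. orbit p j) ` (I - orbit p i)"
    using permutation_self_in_orbit[OF assms(2)] by blast
  ultimately show ?thesis using assms(1) by simp
qed

lemma perm_trace_on_eq_prod_cycles:
  assumes "finite I" "permutation \<tau>" "\<tau> ` I \<subseteq> I"
  shows "\<exists>css. (\<forall>Y :: nat \<Rightarrow> 'a::comm_semiring_1^'d::finite^'d.
      perm_trace_on I \<tau> Y = (\<Prod>cs\<leftarrow>css. mtrace (mprod_list (map Y cs))))
    \<and> distinct (concat css) \<and> set (concat css) = I
    \<and> mset (map set css) = mset_set ((\<lambda>i. orbit \<tau> i) ` I)"
  using assms(1,3)
proof (induction I rule: finite_psubset_induct)
  case (psubset I)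
  show ?case
  proof (cases "I = {}")
    case True
    then show ?thesis by (intro exI[of _ "[]"]) (simp add: perm_trace_on_def)
  next
    case False
    then obtain i where i: "i \<in> I" by blast
    define C where "C = orbit \<tau> i"
    have C: "C \<subseteq> I" "i \<in> C" "set (support \<tau> i) = C"
      using orbit_subset_if_image_subset[OF psubset.prems i] permutation_self_in_orbit[OF assms(2)]
        set_support_eq_orbit[OF assms(2)] by (auto simp: C_def)
    have psub: "I - C \<subset> I" using C(2) i by blast
    have inv: "\<tau> ` (I - C) \<subseteq> I - C"
      unfolding C_def by (rule image_Diff_orbit_subset[OF assms(2) psubset.prems])
    obtain css where css:
      "\<forall>Y :: nat \<Rightarrow> 'a^'d^'d. perm_trace_on (I - C) \<tau> Y = (\<Prod>cs\<leftarrow>css. mtrace (mprod_list (map Y cs)))"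
      "distinct (concat css)" "set (concat css) = I - C"
      "mset (map set css) = mset_set ((\<lambda>i. orbit \<tau> i) ` (I - C))"
      using psubset.IH[OF psub inv] by blast
    have "perm_trace_on I \<tau> Y = (\<Prod>cs\<leftarrow>support \<tau> i # css. mtrace (mprod_list (map Y cs)))"
      for Y :: "nat \<Rightarrow> 'a^'d^'d"
      unfolding perm_trace_on_orbit[OF psubset.hyps(1) assms(2) psubset.prems i, folded C_def]
        css(1)[rule_format] by simp
    moreover have "mset (map set (support \<tau> i # css)) = mset_set ((\<lambda>j. orbit \<tau> j) ` I)"
      using mset_set_orbits_Diff_orbit[OF psubset.hyps(1) assms(2) i C(1)[unfolded C_def]]
        css(4) C(3) by (simp add: C_def)
    moreover have "distinct (concat (support \<tau> i # css))"
      using cycle_of_permutation[OF assms(2)] css(2,3) C(3) by auto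
    moreover have "set (concat (support \<tau> i # css)) = I" using css(3) C by auto
    ultimately show ?thesis by blast
  qed
qed

lemma tr_perm_ST:
  "tr_perm n \<sigma> (ST h x) = (\<Sum>\<tau> | \<tau> permutes {..<sum_list h}.
      of_int (sign \<tau>) * tr_perm n \<sigma> (tensor_mats (length h) (\<lambda>j. Xblock h j (\<lambda>i. x (\<tau> i)))))"
  unfolding tr_perm_def ST_def
  by (simp add: sum_distrib_left sum_distrib_right mult_ac sum.swap[of _ "{\<tau>. \<tau> permutes _}"])

lemma tr_perm_tensor_mats:
  fixes Y :: "nat \<Rightarrow> 'a::comm_ring_1^'d::finite^'d"
  shows "tr_perm n \<sigma> (tensor_mats n Y) = perm_trace_on {..<n} (inv \<sigma>) Y"
proof -
  define \<rho> :: "(nat \<Rightarrow> 'd) \<Rightarrow> nat \<Rightarrow> 'd" where "\<rho> s = restrict (\<lambda>j. s (inv \<sigma> j)) {..<n}" for s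
  have "tr_perm n \<sigma> (tensor_mats n Y) =
      (\<Sum>s\<in>midx n. \<Sum>r\<in>midx n. perm_op n \<sigma> r s * tensor_mats n Y s r)"
    unfolding tr_perm_def by (rule sum.swap)
  also have "\<dots> = (\<Sum>s\<in>midx n. tensor_mats n Y s (\<rho> s))"
  proof (intro sum.cong refl)
    fix s :: "nat \<Rightarrow> 'd"
    have "\<rho> s \<in> midx n" "finite (midx n :: (nat \<Rightarrow> 'd) set)"
      by (auto simp: \<rho>_def midx_def finite_PiE)
    moreover have "(\<Sum>r\<in>midx n. perm_op n \<sigma> r s * tensor_mats n Y s r) =
        (\<Sum>r\<in>midx n. if r = \<rho> s then tensor_mats n Y s r else 0)"
      by (intro sum.cong) (auto simp: perm_op_def \<rho>_def)
    ultimately show "(\<Sum>r\<in>midx n. perm_op n \<sigma> r s * tensor_mats n Y s r) = tensor_mats n Y s (\<rho> s)"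
      by simp
  qed
  also have "\<dots> = perm_trace_on {..<n} (inv \<sigma>) Y"
    unfolding perm_trace_on_def midx_def tensor_mats_def \<rho>_def
    by (intro sum.cong prod.cong refl) auto
  finally show ?thesis .
qed

section \<open>Alternation\<close>

definition alternation :: "nat \<Rightarrow> ((nat \<Rightarrow> 'm) \<Rightarrow> 'a::comm_ring_1) \<Rightarrow> (nat \<Rightarrow> 'm) \<Rightarrow> 'a" where
  "alternation k F x = (\<Sum>\<tau> | \<tau> permutes {..<k}. of_int (sign \<tau>) * F (\<lambda>i. x (\<tau> i)))"

lemma alternation_permute_args:
  assumes "\<pi> permutes {..<k}"
  shows "alternation k (\<lambda>y. F (\<lambda>i. y (\<pi> i))) x = of_int (sign \<pi>) * alternation k F x"
proof -
  have sign: "(of_int (sign (\<tau> \<circ> \<pi>)) :: 'a) = of_int (sign \<tau>) * of_int (sign \<pi>)"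
    if "\<tau> permutes {..<k}" for \<tau>
    using sign_compose[OF permutes_imp_permutation[OF _ that] permutes_imp_permutation[OF _ assms]]
    by simp
  have "alternation k F x = (\<Sum>\<tau> | \<tau> permutes {..<k}. of_int (sign (\<tau> \<circ> \<pi>)) * F (\<lambda>i. x ((\<tau> \<circ> \<pi>) i)))"
    unfolding alternation_def by (rule sum_permutations_compose_right[OF assms])
  also have "\<dots> = of_int (sign \<pi>) * alternation k (\<lambda>y. F (\<lambda>i. y (\<pi> i))) x"
    unfolding alternation_def sum_distrib_left by (intro sum.cong refl) (simp add: sign mult_ac)
  finally show ?thesis by (simp add: mult.assoc[symmetric] flip: of_int_mult)
qed

lemma alternation_eq_0_if_odd_invariant:
  fixes F :: "(nat \<Rightarrow> 'm) \<Rightarrow> 'a::{idom, ring_char_0}"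
  assumes "\<pi> permutes {..<k}" "sign \<pi> = -1" "\<And>y. F (\<lambda>i. y (\<pi> i)) = F y"
  shows "alternation k F x = 0"
  using alternation_permute_args[OF assms(1), of F x] assms(2,3) by simp

section \<open>Products of traces of words\<close>

definition trace_words :: "nat list list \<Rightarrow> (nat \<Rightarrow> 'a::comm_semiring_1^'d^'d) \<Rightarrow> 'a" where
  "trace_words ws y = (\<Prod>w\<leftarrow>ws. mtrace (mprod_list (map y w)))"

lemma trace_words_Cons: "trace_words (w # ws) y = mtrace (mprod_list (map y w)) * trace_words ws y"
  by (simp add: trace_words_def)

lemma trace_words_append: "trace_words (ws @ vs) y = trace_words ws y * trace_words vs y"
  by (simp add: trace_words_def)

lemma trace_words_reindex: "trace_words ws (\<lambda>i. y (\<pi> i)) = trace_words (map (map \<pi>) ws) y"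
  by (simp add: trace_words_def o_def)

lemma trace_words_mset_eq: "mset ws = mset vs \<Longrightarrow> trace_words ws y = trace_words vs y"
  unfolding trace_words_def by (metis mset_map prod_mset_prod_list)

fun consecutive_words :: "nat list \<Rightarrow> nat \<Rightarrow> nat list list" where
  "consecutive_words [] i = []"
| "consecutive_words (l # ls) i = [i..<i + l] # consecutive_words ls (i + l)"

lemma consecutive_words_append:
  "consecutive_words (ls @ ms) i = consecutive_words ls i @ consecutive_words ms (i + sum_list ls)"
  by (induction ls arbitrary: i) (simp_all add: add.assoc)

lemma mem_consecutive_words_bounds:
  "w \<in> set (consecutive_words ls i) \<Longrightarrow> j \<in> set w \<Longrightarrow> i \<le> j \<and> j < i + sum_list ls"
  by (induction ls arbitrary: i) fastforce+

lemma consecutive_words_shift: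
  "map (map (\<lambda>j. c + j)) (consecutive_words ls i) = consecutive_words ls (c + i)"
proof -
  have "map (\<lambda>j. c + j) [a..<b] = [c + a..<c + b]" for a b
    by (rule nth_equalityI) auto
  then show ?thesis by (induction ls arbitrary: i) (simp_all add: add.assoc)
qed

lemma trace_words_consecutive_words_shift:
  "trace_words (consecutive_words ls i) y = trace_words (consecutive_words ls 0) (\<lambda>j. y (i + j))"
  using consecutive_words_shift[of i ls 0] by (simp add: trace_words_reindex)

lemma map_map_consecutive_words_id:
  assumes "\<And>j. i \<le> j \<Longrightarrow> j < i + sum_list ls \<Longrightarrow> \<pi> j = j"
  shows "map (map \<pi>) (consecutive_words ls i) = consecutive_words ls i"
  using mem_consecutive_words_bounds assms by (intro map_idI) blast

lemma map_nth_consecutive_words: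
  "map (map (\<lambda>i. (pre @ concat ws) ! i)) (consecutive_words (map length ws) (length pre)) = ws"
proof (induction ws arbitrary: pre)
  case (Cons w ws)
  have "map (\<lambda>i. (pre @ w @ concat ws) ! i) [length pre..<length pre + length w] = w"
    by (rule nth_equalityI) (auto simp: nth_append)
  moreover have "map (map (\<lambda>i. ((pre @ w) @ concat ws) ! i))
      (consecutive_words (map length ws) (length (pre @ w))) = ws"
    by (rule Cons.IH)
  ultimately show ?case by simp
qed simp

lemma trace_words_relabel:
  assumes "mset (concat ws) = mset [0..<k]"
  obtains \<pi> where "\<pi> permutes {..<k}"
    "\<And>y. trace_words ws y = trace_words (consecutive_words (map length ws) 0) (\<lambda>i. y (\<pi> i))"
proof -
  define L where "L = concat ws"
  have "distinct L" using mset_eq_imp_distinct_iff[OF assms] by (simp add: L_def)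
  moreover have L: "set L = {..<k}" "length L = k"
    using mset_eq_setD[OF assms] mset_eq_length[OF assms] by (auto simp: L_def)
  ultimately have "bij_betw ((!) L) {..<k} {..<k}" by (simp add: bij_betw_nth)
  define \<pi> where "\<pi> i = (if i < k then L ! i else i)" for i
  have "bij_betw \<pi> {..<k} {..<k}"
    by (rule bij_betw_cong[THEN iffD1, OF _ \<open>bij_betw ((!) L) {..<k} {..<k}\<close>]) (simp add: \<pi>_def)
  then have "\<pi> permutes {..<k}" by (rule bij_imp_permutes) (simp add: \<pi>_def)
  moreover have "map (map \<pi>) (consecutive_words (map length ws) 0) = ws"
  proof -
    have "sum_list (map length ws) = k" using L(2) by (simp add: L_def length_concat)
    then have "map (map \<pi>) (consecutive_words (map length ws) 0) =
        map (map (\<lambda>i. ([] @ L) ! i)) (consecutive_words (map length ws) (length ([] :: nat list)))"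
      using mem_consecutive_words_bounds[of _ "map length ws" 0]
      by (force simp: \<pi>_def intro!: map_cong)
    then show ?thesis unfolding L_def map_nth_consecutive_words .
  qed
  ultimately show thesis by (intro that[of \<pi>]) (simp_all add: trace_words_reindex)
qed

section \<open>Wedge products of alternations\<close>

lemma map_permutation_add_permutes:
  fixes m K :: nat
  assumes "\<rho> permutes {..<K}"
  shows "map_permutation {..<K} ((+) m) \<rho> permutes {m..<m + K}"
proof (rule map_permutation_permutes[OF _ assms])
  have "(+) m ` {..<K} = {m..<m + K}"
    using image_add_atLeastLessThan[of m 0 K] by (simp add: lessThan_atLeast0 add.commute)
  then show "bij_betw ((+) m) {..<K} {m..<m + K}" by (simp add: bij_betw_def)
qed

definition block_sum_perm :: "nat \<Rightarrow> (nat \<Rightarrow> nat) \<Rightarrow> (nat \<Rightarrow> nat) \<Rightarrow> nat \<Rightarrow> nat" where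
  "block_sum_perm m \<alpha> \<rho> j = (if j < m then \<alpha> j else m + \<rho> (j - m))"

lemma block_sum_perm_eq_comp:
  assumes "\<alpha> permutes {..<m}" "\<rho> permutes {..<K}"
  shows "block_sum_perm m \<alpha> \<rho> = \<alpha> \<circ> map_permutation {..<K} ((+) m) \<rho>"
proof
  fix j
  note shift = map_permutation_add_permutes[OF assms(2), of m]
  show "block_sum_perm m \<alpha> \<rho> j = (\<alpha> \<circ> map_permutation {..<K} ((+) m) \<rho>) j"
  proof (cases "j < m")
    case True
    then show ?thesis using permutes_not_in[OF shift] by (simp add: block_sum_perm_def)
  next
    case False
    then obtain i where j: "j = m + i" by (metis le_add_diff_inverse not_less)
    show ?thesis
    proof (cases "i < K")
      case True
      then show ?thesis
        using permutes_not_in[OF assms(1)] map_permutation_apply[of "(+) m" "{..<K}" i \<rho>]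
        by (simp add: block_sum_perm_def j)
    next
      case False
      then show ?thesis
        using permutes_not_in[OF assms(1)] permutes_not_in[OF shift] permutes_not_in[OF assms(2)]
        by (simp add: block_sum_perm_def j)
    qed
  qed
qed

lemma block_sum_perm_permutes:
  assumes "\<alpha> permutes {..<m}" "\<rho> permutes {..<K}"
  shows "block_sum_perm m \<alpha> \<rho> permutes {..<m + K}"
  unfolding block_sum_perm_eq_comp[OF assms]
  by (intro permutes_compose permutes_subset[OF map_permutation_add_permutes[OF assms(2)]]
      permutes_subset[OF assms(1)]) auto

lemma sign_block_sum_perm:
  assumes "\<alpha> permutes {..<m}" "\<rho> permutes {..<K}"
  shows "sign (block_sum_perm m \<alpha> \<rho>) = sign \<alpha> * sign \<rho>"
proof -
  have "permutation \<alpha>" "permutation (map_permutation {..<K} ((+) m) \<rho>)"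
    using assms(1) map_permutation_add_permutes[OF assms(2)]
    by (auto intro: permutes_imp_permutation)
  then show ?thesis
    using sign_map_permutation[of "(+) m" "{..<K}" \<rho>] assms(2)
    by (simp add: block_sum_perm_eq_comp[OF assms] sign_compose)
qed

lemma alternation_mult_alternation:
  fixes A B :: "(nat \<Rightarrow> 'm) \<Rightarrow> 'a::comm_ring_1"
  assumes "\<And>z z'. (\<And>i. i < m \<Longrightarrow> z i = z' i) \<Longrightarrow> A z = A z'"
  shows "alternation m A y * alternation K B (\<lambda>i. y (m + i)) =
    (\<Sum>\<alpha> | \<alpha> permutes {..<m}. \<Sum>\<rho> | \<rho> permutes {..<K}. of_int (sign (block_sum_perm m \<alpha> \<rho>)) *
       (A (\<lambda>i. y (block_sum_perm m \<alpha> \<rho> i)) * B (\<lambda>i. y (block_sum_perm m \<alpha> \<rho> (m + i)))))"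
  unfolding alternation_def sum_product
proof (intro sum.cong refl)
  fix \<alpha> \<rho> assume "\<alpha> \<in> {\<alpha>. \<alpha> permutes {..<m}}" "\<rho> \<in> {\<rho>. \<rho> permutes {..<K}}"
  then have "sign (block_sum_perm m \<alpha> \<rho>) = sign \<alpha> * sign \<rho>"
    by (simp add: sign_block_sum_perm)
  moreover have "A (\<lambda>i. y (block_sum_perm m \<alpha> \<rho> i)) = A (\<lambda>i. y (\<alpha> i))"
    by (rule assms) (simp add: block_sum_perm_def)
  ultimately show "of_int (sign \<alpha>) * A (\<lambda>i. y (\<alpha> i)) * (of_int (sign \<rho>) * B (\<lambda>i. y (m + \<rho> i))) =
      of_int (sign (block_sum_perm m \<alpha> \<rho>)) *
      (A (\<lambda>i. y (block_sum_perm m \<alpha> \<rho> i)) * B (\<lambda>i. y (block_sum_perm m \<alpha> \<rho> (m + i))))"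
    by (simp add: block_sum_perm_def mult_ac)
qed

lemma wedge_alternation:
  fixes A B :: "(nat \<Rightarrow> 'm) \<Rightarrow> 'a::field_char_0"
  assumes "\<And>z z'. (\<And>i. i < m \<Longrightarrow> z i = z' i) \<Longrightarrow> A z = A z'"
  shows "wedge (alternation m A) m (alternation K B) K x =
    alternation (m + K) (\<lambda>z. A z * B (\<lambda>i. z (m + i))) x"
proof -
  define F where "F = (\<lambda>z. A z * B (\<lambda>i. z (m + i)))"
  define P Pm PK where "P = {\<tau>. \<tau> permutes {..<m + K}}" and
    "Pm = {\<alpha>. \<alpha> permutes {..<m}}" and "PK = {\<rho>. \<rho> permutes {..<K}}"
  let ?\<beta> = "block_sum_perm m"
  have prod: "alternation m A (\<lambda>i. x (\<tau> i)) * alternation K B (\<lambda>i. x (\<tau> (m + i))) =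
      (\<Sum>\<alpha>\<in>Pm. \<Sum>\<rho>\<in>PK. of_int (sign (?\<beta> \<alpha> \<rho>)) * F (\<lambda>i. x (\<tau> (?\<beta> \<alpha> \<rho> i))))" for \<tau>
    using alternation_mult_alternation[OF assms, where y = "\<lambda>i. x (\<tau> i)" and K = K and B = B]
    by (simp add: F_def Pm_def PK_def)
  have "(\<Sum>\<tau>\<in>P. of_int (sign \<tau>) *
        alternation m A (\<lambda>i. x (\<tau> i)) * alternation K B (\<lambda>i. x (\<tau> (m + i)))) =
      (\<Sum>\<tau>\<in>P. \<Sum>\<alpha>\<in>Pm. \<Sum>\<rho>\<in>PK.
         of_int (sign (?\<beta> \<alpha> \<rho>)) * (of_int (sign \<tau>) * F (\<lambda>i. x (\<tau> (?\<beta> \<alpha> \<rho> i)))))"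
    unfolding mult.assoc prod by (simp add: sum_distrib_left mult_ac)
  also have "\<dots> = (\<Sum>\<alpha>\<in>Pm. \<Sum>\<rho>\<in>PK.
      of_int (sign (?\<beta> \<alpha> \<rho>)) * alternation (m + K) (\<lambda>y. F (\<lambda>i. y (?\<beta> \<alpha> \<rho> i))) x)"
    unfolding alternation_def P_def[symmetric] by (simp add: sum_distrib_left sum.swap[of _ P])
  also have "\<dots> = (\<Sum>\<alpha>\<in>Pm. \<Sum>\<rho>\<in>PK. alternation (m + K) F x)"
  proof (intro sum.cong refl)
    fix \<alpha> \<rho> assume "\<alpha> \<in> Pm" "\<rho> \<in> PK"
    then have "?\<beta> \<alpha> \<rho> permutes {..<m + K}"
      by (simp add: Pm_def PK_def block_sum_perm_permutes)
    then show "of_int (sign (?\<beta> \<alpha> \<rho>)) * alternation (m + K) (\<lambda>y. F (\<lambda>i. y (?\<beta> \<alpha> \<rho> i))) x =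
        alternation (m + K) F x"
      by (simp add: alternation_permute_args mult.assoc[symmetric] flip: of_int_mult)
  qed
  also have "\<dots> = fact m * fact K * alternation (m + K) F x"
    by (simp add: Pm_def PK_def card_permutations)
  finally show ?thesis by (simp add: wedge_def F_def P_def)
qed

lemma Tfun_eq_alternation: "Tfun m = alternation m (\<lambda>z. mtrace (mprod_list (map z [0..<m])))"
  unfolding Tfun_def alternation_def mtrace_sum mtrace_msmult by simp

lemma wedgeT_eq_alternation:
  fixes x :: "nat \<Rightarrow> 'a::field_char_0^'d::finite^'d"
  shows "wedgeT ls x = alternation (sum_list ls) (trace_words (consecutive_words ls 0)) x"
proof (induction ls arbitrary: x)
  case Nil
  show ?case by (simp add: alternation_def trace_words_def)
next
  case (Cons m ms)
  define A :: "(nat \<Rightarrow> 'a^'d^'d) \<Rightarrow> 'a" where "A = (\<lambda>z. mtrace (mprod_list (map z [0..<m])))"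
  define B :: "(nat \<Rightarrow> 'a^'d^'d) \<Rightarrow> 'a" where "B = trace_words (consecutive_words ms 0)"
  have "A z = A z'" if "\<And>i. i < m \<Longrightarrow> z i = z' i" for z z'
  proof -
    have "map z [0..<m] = map z' [0..<m]" using that by (intro map_cong) auto
    then show ?thesis by (simp only: A_def)
  qed
  then have "wedge (alternation m A) m (alternation (sum_list ms) B) (sum_list ms) x =
      alternation (m + sum_list ms) (\<lambda>z. A z * B (\<lambda>i. z (m + i))) x"
    by (rule wedge_alternation)
  moreover have "(\<lambda>z. A z * B (\<lambda>i. z (m + i))) = trace_words (consecutive_words (m # ms) 0)"
    by (simp add: fun_eq_iff A_def B_def trace_words_Cons
        trace_words_consecutive_words_shift[of ms m])
  moreover have "Tfun m = alternation m A" "wedgeT ms = alternation (sum_list ms) B"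
    using Cons.IH by (simp_all add: Tfun_eq_alternation A_def B_def fun_eq_iff)
  ultimately show ?case by simp
qed

section \<open>Vanishing of the alternation\<close>

lemma sign_cycle_of_list:
  "distinct cs \<Longrightarrow> cs \<noteq> [] \<Longrightarrow> sign (cycle_of_list cs) = (-1) ^ (length cs - 1)"
proof (induction cs rule: cycle_of_list.induct)
  case (1 i j cs)
  have "sign (cycle_of_list (i # j # cs)) =
      sign (Transposition.transpose i j) * sign (cycle_of_list (j # cs))"
    by (simp add: sign_compose permutation_swap_id permutation_of_cycle)
  also have "sign (Transposition.transpose i j) = -1" using "1.prems" by (simp add: sign_swap_id)
  also have "sign (cycle_of_list (j # cs)) = (-1) ^ (length (j # cs) - 1)"
    using "1.prems" by (intro "1.IH") auto
  finally show ?case by simp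
qed auto

lemma alternation_consecutive_words_even_eq_0:
  fixes x :: "nat \<Rightarrow> 'a::{idom, ring_char_0}^'d^'d"
  assumes "even l" "l > 0"
  shows "alternation (sum_list (ls @ l # ms))
    (trace_words (consecutive_words (ls @ l # ms) 0)) x = 0"
proof -
  define i where "i = sum_list ls"
  define w where "w = [i..<i + l]"
  define \<pi> where "\<pi> = cycle_of_list w"
  have w: "distinct w" "w \<noteq> []" "length w = l" "set w = {i..<i + l}"
    using assms(2) by (auto simp: w_def)
  have "\<pi> permutes {..<sum_list (ls @ l # ms)}"
    using cycle_permutes[of w] unfolding \<pi>_def by (rule permutes_subset) (auto simp: w(4) i_def)
  moreover have "sign \<pi> = -1"
    using sign_cycle_of_list[OF w(1,2)] w(3) assms by (simp add: \<pi>_def)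
  moreover have "trace_words (consecutive_words (ls @ l # ms) 0) (\<lambda>j. y (\<pi> j)) =
      trace_words (consecutive_words (ls @ l # ms) 0) y" for y :: "nat \<Rightarrow> 'a^'d^'d"
  proof -
    have fix_out: "\<pi> j = j" if "j \<notin> set w" for j
      unfolding \<pi>_def by (rule id_outside_supp[OF that])
    have "map (map \<pi>) (consecutive_words ls 0) = consecutive_words ls 0"
      by (rule map_map_consecutive_words_id) (auto intro!: fix_out simp: w(4) i_def)
    moreover have "map (map \<pi>) (consecutive_words ms (i + l)) = consecutive_words ms (i + l)"
      by (rule map_map_consecutive_words_id) (auto intro!: fix_out simp: w(4))
    moreover have "map \<pi> w = rotate1 w"
      using cyclic_rotation[OF w(1), of 1] by (simp add: \<pi>_def)
    ultimately show ?thesis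
      by (simp add: trace_words_reindex consecutive_words_append trace_words_append trace_words_Cons
          mtrace_mprod_list_rotate1 flip: i_def w_def)
  qed
  ultimately show ?thesis by (rule alternation_eq_0_if_odd_invariant)
qed

fun swap_blocks :: "nat \<Rightarrow> nat \<Rightarrow> nat \<Rightarrow> nat \<Rightarrow> nat" where
  "swap_blocks a d 0 = id"
| "swap_blocks a d (Suc c) = Transposition.transpose (a + c) (a + d + c) \<circ> swap_blocks a d c"

lemma permutation_swap_blocks: "permutation (swap_blocks a d c)"
  by (induction c)
    (simp_all only: swap_blocks.simps permutation_id permutation_compose permutation_swap_id)

lemma sign_swap_blocks: "d > 0 \<Longrightarrow> sign (swap_blocks a d c) = (-1) ^ c"
  by (induction c)
    (simp_all add: sign_compose permutation_swap_id permutation_swap_blocks sign_swap_id)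

lemma swap_blocks_apply:
  "c \<le> d \<Longrightarrow> swap_blocks a d c j = (if a \<le> j \<and> j < a + c then j + d
      else if a + d \<le> j \<and> j < a + d + c then j - d else j)"
  by (induction c arbitrary: j) (auto simp: Transposition.transpose_def)

lemma swap_blocks_permutes: "c \<le> d \<Longrightarrow> swap_blocks a d c permutes {a..<a + d + c}"
  by (induction c) (auto intro!: permutes_compose permutes_swap_id elim: permutes_subset)

lemma alternation_consecutive_words_repeated_eq_0:
  fixes x :: "nat \<Rightarrow> 'a::{idom, ring_char_0}^'d^'d"
  assumes "odd l"
  shows "alternation (sum_list (ls @ l # l # ms))
    (trace_words (consecutive_words (ls @ l # l # ms) 0)) x = 0"
proof -
  define i where "i = sum_list ls"
  define \<pi> where "\<pi> = swap_blocks i l l"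
  have \<pi>: "\<pi> j = (if i \<le> j \<and> j < i + l then j + l
      else if i + l \<le> j \<and> j < i + l + l then j - l else j)" for j
    unfolding \<pi>_def by (rule swap_blocks_apply) simp
  have "\<pi> permutes {..<sum_list (ls @ l # l # ms)}"
    using swap_blocks_permutes[of l l i] unfolding \<pi>_def
    by (rule permutes_subset) (auto simp: i_def)
  moreover have "sign \<pi> = -1"
    using sign_swap_blocks[of l i l] assms by (cases l) (simp_all add: \<pi>_def)
  moreover have "trace_words (consecutive_words (ls @ l # l # ms) 0) (\<lambda>j. y (\<pi> j)) =
      trace_words (consecutive_words (ls @ l # l # ms) 0) y" for y :: "nat \<Rightarrow> 'a^'d^'d"
  proof -
    have "map (map \<pi>) (consecutive_words ls 0) = consecutive_words ls 0"
      by (rule map_map_consecutive_words_id) (auto simp: \<pi> i_def)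
    moreover have
      "map (map \<pi>) (consecutive_words ms (i + l + l)) = consecutive_words ms (i + l + l)"
      by (rule map_map_consecutive_words_id) (auto simp: \<pi>)
    moreover have
      "map \<pi> [i..<i + l] = [i + l..<i + l + l]" "map \<pi> [i + l..<i + l + l] = [i..<i + l]"
      by (auto intro: nth_equalityI simp: \<pi>)
    ultimately show ?thesis
      by (simp add: trace_words_reindex consecutive_words_append trace_words_append trace_words_Cons
          mult_ac flip: i_def)
  qed
  ultimately show ?thesis by (rule alternation_eq_0_if_odd_invariant)
qed

section \<open>The words attached to the cycles of \<sigma>\<close>

definition block_indices :: "nat list \<Rightarrow> nat \<Rightarrow> nat list" where
  "block_indices h j = [sum_list (take j h)..<sum_list (take (Suc j) h)]"

lemma Xblock_eq_block_indices: "Xblock h j y = mprod_list (map y (block_indices h j))"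
  by (simp add: Xblock_def block_indices_def)

lemma length_block_indices: "j < length h \<Longrightarrow> length (block_indices h j) = h ! j"
  by (simp add: block_indices_def take_Suc_conv_app_nth)

lemma concat_block_indices:
  "m \<le> length h \<Longrightarrow> concat (map (block_indices h) [0..<m]) = [0..<sum_list (take m h)]"
proof (induction m)
  case (Suc m)
  then have "concat (map (block_indices h) [0..<Suc m]) =
      [0..<sum_list (take m h)] @ block_indices h m"
    by simp
  also have "\<dots> = [0..<sum_list (take (Suc m) h)]"
    using Suc.prems by (simp add: block_indices_def take_Suc_conv_app_nth upt_add_eq_append[of 0])
  finally show ?case .
qed simp

lemma length_concat_block_indices:
  assumes "distinct cs" "set cs \<subseteq> {..<length h}"
  shows "length (concat (map (block_indices h) cs)) = (\<Sum>j\<in>set cs. h ! j)"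
  using assms by (simp add: length_concat o_def sum_list_distinct_conv_sum_set)
    (auto intro!: sum.cong simp: length_block_indices)

lemma mset_concat_map_cong:
  assumes "mset xs = mset ys"
  shows "mset (concat (map g xs)) = mset (concat (map g ys))"
proof -
  have "mset (concat (map g zs)) = (\<Sum>z\<in>#mset zs. mset (g z))" for zs
    by (induction zs) simp_all
  then show ?thesis using assms by simp
qed

lemma tr_perm_Xblock_eq_trace_words:
  assumes "\<sigma> permutes {..<length h}"
  obtains ws where
    "\<And>y :: nat \<Rightarrow> 'a::comm_ring_1^'d::finite^'d.
      tr_perm (length h) \<sigma> (tensor_mats (length h) (\<lambda>j. Xblock h j y)) = trace_words ws y"
    "mset (concat ws) = mset [0..<sum_list h]"
    "mset (map length ws) = cycle_partition h \<sigma>"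
proof -
  define n where "n = length h"
  have perm: "permutation \<sigma>" using assms by (auto intro: permutes_imp_permutation)
  obtain css where css: "\<forall>Y :: nat \<Rightarrow> 'a^'d^'d.
      perm_trace_on {..<n} (inv \<sigma>) Y = (\<Prod>cs\<leftarrow>css. mtrace (mprod_list (map Y cs)))"
    "distinct (concat css)" "set (concat css) = {..<n}"
    "mset (map set css) = mset_set ((\<lambda>i. orbit (inv \<sigma>) i) ` {..<n})"
    using perm_trace_on_eq_prod_cycles[of "{..<n}" "inv \<sigma>"] permutation_inverse[OF perm]
      permutes_image[OF permutes_inv[OF assms]] by (auto simp: n_def)
  define ws where "ws = map (\<lambda>cs. concat (map (block_indices h) cs)) css"
  show thesis
  proof (rule that)
    fix y :: "nat \<Rightarrow> 'a^'d^'d"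
    show "tr_perm (length h) \<sigma> (tensor_mats (length h) (\<lambda>j. Xblock h j y)) = trace_words ws y"
      using css(1) by (simp add: tr_perm_tensor_mats n_def ws_def trace_words_def o_def
          mprod_list_map_concat Xblock_eq_block_indices)
  next
    have "mset (concat css) = mset [0..<n]"
      using css(2,3) by (simp add: mset_set_set[symmetric] atLeast0LessThan)
    moreover have "concat ws = concat (map (block_indices h) (concat css))"
      unfolding ws_def by (induction css) simp_all
    ultimately have "mset (concat ws) = mset (concat (map (block_indices h) [0..<n]))"
      by (simp add: mset_concat_map_cong)
    then show "mset (concat ws) = mset [0..<sum_list h]"
      by (simp add: concat_block_indices n_def)
  next
    have "length (concat (map (block_indices h) cs)) = (\<Sum>j\<in>set cs. h ! j)" if "cs \<in> set css" for cs
      using css(2,3) that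
      by (intro length_concat_block_indices) (auto simp: distinct_concat_iff n_def)
    then have "mset (map length ws) = mset (map (\<lambda>cs. \<Sum>j\<in>set cs. h ! j) css)"
      by (simp add: ws_def o_def cong: map_cong)
    also have "\<dots> = image_mset (\<lambda>C. \<Sum>i\<in>C. h ! i) (mset (map set css))"
      by (simp add: image_mset.compositionality o_def)
    finally have "mset (map length ws) = image_mset (\<lambda>C. \<Sum>i\<in>C. h ! i) (mset (map set css))" .
    then show "mset (map length ws) = cycle_partition h \<sigma>"
      unfolding css(4) orbit_inv_eq[OF perm] cycle_partition_def n_def .
  qed
qed

lemma cycle_partition_pos:
  assumes "\<forall>p\<in>set h. 0 < p" "\<sigma> permutes {..<length h}" "m \<in># cycle_partition h \<sigma>"
  shows "0 < m"
proof -
  obtain j where j: "j < length h" "m = (\<Sum>i\<in>orbit \<sigma> j. h ! i)"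
    using assms(3) by (auto simp: cycle_partition_def)
  have orbit: "orbit \<sigma> j \<subseteq> {..<length h}" using permutes_orbit_subset[OF assms(2)] j(1) by simp
  show ?thesis unfolding j(2)
  proof (rule sum_pos)
    show "finite (orbit \<sigma> j)" using finite_subset[OF orbit] by simp
    show "orbit \<sigma> j \<noteq> {}" by (rule orbit_nonempty)
    show "0 < h ! i" if "i \<in> orbit \<sigma> j" for i using orbit that assms(1) by auto
  qed
qed

lemma mset_eq_map_imp_ex_reorder:
  assumes "mset ls = mset (map f xs)"
  shows "\<exists>ys. mset ys = mset xs \<and> map f ys = ls"
proof -
  have "list_all2 (\<lambda>l x. l = f x) (map f xs) xs"
    by (simp add: list_all2_map1 list.rel_refl)
  then obtain ys where "list_all2 (\<lambda>l x. l = f x) ls ys" "mset ys = mset xs"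
    using list_all2_reorder_left_invariance assms by blast
  then have "list_all2 (=) ls (map f ys)" by (simp add: list_all2_map2)
  then show ?thesis using \<open>mset ys = mset xs\<close> by (auto simp: list.rel_eq)
qed

lemma sorted_wrt_ge_repeated_adjacent:
  fixes xs :: "'a::linorder list"
  assumes "sorted_wrt (\<ge>) xs" "2 \<le> count (mset xs) m"
  shows "\<exists>as bs. xs = as @ m # m # bs"
  using assms
proof (induction xs)
  case (Cons x xs)
  show ?case
  proof (cases "x = m")
    case True
    then have "m \<in> set xs" using Cons.prems(2) by (simp split: if_splits)
    then obtain y ys where xs: "xs = y # ys" by (cases xs) auto
    then have "y = m" using \<open>m \<in> set xs\<close> Cons.prems(1) True by auto
    then show ?thesis using xs True by (intro exI[of _ "[]"] exI[of _ ys]) simp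
  next
    case False
    then have "\<exists>as bs. xs = as @ m # m # bs" using Cons by auto
    then show ?thesis by (metis append_Cons)
  qed
qed simp

lemma alternation_consecutive_words_eq_0:
  fixes x :: "nat \<Rightarrow> 'a::{idom, ring_char_0}^'d^'d"
  assumes "sorted_wrt (\<ge>) ls" "\<forall>m\<in>set ls. 0 < m"
    and "(\<exists>m\<in>set ls. even m) \<or> (\<exists>m. 2 \<le> count (mset ls) m)"
  shows "alternation (sum_list ls) (trace_words (consecutive_words ls 0)) x = 0"
proof (cases "\<exists>m\<in>set ls. even m")
  case True
  then obtain m where "m \<in> set ls" "even m" by blast
  moreover obtain ls1 ls2 where "ls = ls1 @ m # ls2" using split_list[OF \<open>m \<in> set ls\<close>] by blast
  ultimately show ?thesis using assms(2) alternation_consecutive_words_even_eq_0 by auto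
next
  case False
  obtain m where m: "2 \<le> count (mset ls) m" using assms(3) False by blast
  then have "m \<in># mset ls" by (intro count_inI) simp
  then have "odd m" using False by simp
  then obtain ls1 ls2 where "ls = ls1 @ m # m # ls2"
    using sorted_wrt_ge_repeated_adjacent[OF assms(1) m] by blast
  then show ?thesis using alternation_consecutive_words_repeated_eq_0[OF \<open>odd m\<close>] by simp
qed

lemma tr_perm_ST_eq_signed_alternation:
  assumes "\<sigma> permutes {..<length h}" "mset ls = cycle_partition h \<sigma>"
  obtains s where "s = 1 \<or> s = -1"
    "\<And>x :: nat \<Rightarrow> 'a::comm_ring_1^'d::finite^'d. tr_perm (length h) \<sigma> (ST h x) =
       s * alternation (sum_list ls) (trace_words (consecutive_words ls 0)) x"
proof -
  obtain ws where ws: "\<And>y :: nat \<Rightarrow> 'a^'d^'d.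
      tr_perm (length h) \<sigma> (tensor_mats (length h) (\<lambda>j. Xblock h j y)) = trace_words ws y"
    "mset (concat ws) = mset [0..<sum_list h]" "mset (map length ws) = cycle_partition h \<sigma>"
    using tr_perm_Xblock_eq_trace_words[OF assms(1)] by blast
  obtain ws' where ws': "mset ws' = mset ws" "map length ws' = ls"
    using mset_eq_map_imp_ex_reorder[of ls length ws] ws(3) assms(2) by auto
  have concat: "mset (concat ws') = mset [0..<sum_list h]"
    using mset_concat_map_cong[OF ws'(1), of "\<lambda>w. w"] ws(2) by simp
  have "sum_list ls = sum_list h"
    using mset_eq_length[OF concat] ws'(2) by (simp add: length_concat)
  with concat have concat': "mset (concat ws') = mset [0..<sum_list ls]" by simp
  obtain \<pi> where \<pi>: "\<pi> permutes {..<sum_list ls}"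
    "\<And>y :: nat \<Rightarrow> 'a^'d^'d. trace_words ws' y = trace_words (consecutive_words ls 0) (\<lambda>i. y (\<pi> i))"
    using trace_words_relabel[OF concat', unfolded ws'(2)] by blast
  show thesis
  proof (rule that)
    show "(of_int (sign \<pi>) :: 'a) = 1 \<or> of_int (sign \<pi>) = -1" by (simp add: sign_def)
  next
    fix x :: "nat \<Rightarrow> 'a^'d^'d"
    have "tr_perm (length h) \<sigma> (ST h x) = (\<Sum>\<tau> | \<tau> permutes {..<sum_list ls}.
        of_int (sign \<tau>) * trace_words (consecutive_words ls 0) (\<lambda>i. x (\<tau> (\<pi> i))))"
      by (simp add: tr_perm_ST ws(1) trace_words_mset_eq[OF ws'(1), symmetric] \<pi>(2)
          \<open>sum_list ls = sum_list h\<close>)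
    also have "\<dots> =
        of_int (sign \<pi>) * alternation (sum_list ls) (trace_words (consecutive_words ls 0)) x"
      using alternation_permute_args[OF \<pi>(1)] by (simp add: alternation_def)
    finally show "tr_perm (length h) \<sigma> (ST h x) =
        of_int (sign \<pi>) * alternation (sum_list ls) (trace_words (consecutive_words ls 0)) x" .
  qed
qed

theorem mainTheorem5:
  fixes h :: "nat list" and \<sigma> :: "nat \<Rightarrow> nat"
  assumes parts_pos: "\<forall>p\<in>set h. 0 < p"
    and parts_noninc: "sorted_wrt (\<ge>) h"
    and sigma_perm: "\<sigma> permutes {..<length h}"
  defines "\<mu> \<equiv> cycle_partition h \<sigma>"
  shows "(((\<exists>m\<in>#\<mu>. even m) \<or> (\<exists>m. 2 \<le> count \<mu> m)) \<longrightarrow>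
           (\<forall>x :: nat \<Rightarrow> 'a::field_char_0^'d::finite^'d.
              tr_perm (length h) \<sigma> (ST h x) = 0)) \<and>
         (\<not> ((\<exists>m\<in>#\<mu>. even m) \<or> (\<exists>m. 2 \<le> count \<mu> m)) \<longrightarrow>
           (\<exists>s::'a. (s = 1 \<or> s = -1) \<and>
              (\<forall>x :: nat \<Rightarrow> 'a^'d^'d.
                 tr_perm (length h) \<sigma> (ST h x) = s * wedgeT (rev (sorted_list_of_multiset \<mu>)) x)))"
proof -
  define ls where "ls = rev (sorted_list_of_multiset \<mu>)"
  have ls: "mset ls = cycle_partition h \<sigma>" "sorted_wrt (\<ge>) ls" "\<forall>m\<in>set ls. 0 < m"
    using cycle_partition_pos[OF parts_pos sigma_perm] by (auto simp: ls_def \<mu>_def sorted_wrt_rev)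
  obtain s :: 'a where s: "s = 1 \<or> s = -1"
    and tr: "\<And>x :: nat \<Rightarrow> 'a^'d^'d. tr_perm (length h) \<sigma> (ST h x) =
      s * alternation (sum_list ls) (trace_words (consecutive_words ls 0)) x"
    using tr_perm_ST_eq_signed_alternation[OF sigma_perm ls(1)] by blast
  show ?thesis
  proof (intro conjI impI allI)
    fix x :: "nat \<Rightarrow> 'a^'d^'d"
    assume "(\<exists>m\<in>#\<mu>. even m) \<or> (\<exists>m. 2 \<le> count \<mu> m)"
    then have "(\<exists>m\<in>set ls. even m) \<or> (\<exists>m. 2 \<le> count (mset ls) m)"
      unfolding \<mu>_def ls(1)[symmetric] by simp
    then show "tr_perm (length h) \<sigma> (ST h x) = 0"
      by (simp add: tr alternation_consecutive_words_eq_0[OF ls(2,3)])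
  next
    show "\<exists>s::'a. (s = 1 \<or> s = -1) \<and> (\<forall>x :: nat \<Rightarrow> 'a^'d^'d.
        tr_perm (length h) \<sigma> (ST h x) = s * wedgeT (rev (sorted_list_of_multiset \<mu>)) x)"
      using s by (auto simp: tr wedgeT_eq_alternation ls_def)
  qed
qed

end
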